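(* Let $\mathfrak{H}$ be a Euclidean space and let $(\mathcal{X},\mathsf{S},\gamma,(\Lambda_{a})_{a\in\mathcal{A}})$ be a spectral decomposition system for $\mathfrak{H}$ such that the set $\{\Lambda_a\}_{a\in\mathcal{A}}$ is closed in $\mathscr{L}(\mathcal{X},\mathfrak{H})$. Let $D$ be a nonempty $\mathsf{S}$-invariant subset of $\mathcal{X}$ and let $X\in\mathfrak{H}$. Then: (i) $N_{\mathsf{F}}(X;\gamma^{-1}(D))=\{\Lambda_a y: y\in N_{\mathsf{F}}(\gamma(X);D)\ \text{and}\ a\in\mathcal{A}_X\}$; (ii) $N_{\mathsf{L}}(X;\gamma^{-1}(D))=\{\Lambda_a y: y\in N_{\mathsf{L}}(\gamma(X);D)\ \text{and}\ a\in\mathcal{A}_X\}$.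
   Context: A Euclidean space is a finite-dimensional real Hilbert space; $\mathscr{L}(\mathcal{X},\mathfrak{H})$ carries the operator-norm topology. A spectral decomposition system for a Euclidean space $\mathfrak{H}$ is a tuple $(\mathcal{X},\mathsf{S},\gamma,(\Lambda_a)_{a\in\mathcal{A}})$ where $\mathcal{X}$ is a Euclidean space, $\mathsf{S}$ is a group acting on $\mathcal{X}$ such that each map $x\mapsto \mathsf{s}\cdot x$ is a linear isometry, $\gamma\colon\mathfrak{H}\to\mathcal{X}$ is a mapping, and each $\Lambda_a\colon\mathcal{X}\to\mathfrak{H}$ is a linear isometry, such that: [A] there exists a mapping $\tau\colon\mathcal{X}\to\mathcal{X}$ with $\tau(\mathsf{s}\cdot x)=\tau(x)$ for all $\mathsf{s},x$, $\tau(x)\in\mathsf{S}\cdot x$ for all $x$, and $\gamma\circ\Lambda_a=\tau$ for all $a\in\mathcal{A}$; [B] for every $X\in\mathfrak{H}$ there exists $a\in\mathcal{A}$ with $X=\Lambda_a\gamma(X)$; [C] $\langle X,Y\rangle\le\langle\gamma(X),\gamma(Y)\rangle$ for all $X,Y\in\mathfrak{H}$. $\mathcal{A}_X=\{a\in\mathcal{A}:X=\Lambda_a\gamma(X)\}$. A set $D\subset\mathcal{X}$ is $\mathsf{S}$-invariant if $\mathsf{s}\cdot x\in D$ for all $x\in D$, $\mathsf{s}\in\mathsf{S}$. For a nonempty subset $C$ of a Euclidean space $\mathcal{H}$: the Fréchet normal cone is $N_{\mathsf{F}}(x;C)=\{y:\limsup_{z\to x,\,z\in C\setminus\{x\}}\langle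 z-x,y\rangle/\|z-x\|\le0\}$ if $x\in C$, $\varnothing$ otherwise; the limiting normal cone $N_{\mathsf{L}}(x;C)$, for $x\in C$, is the set of $y$ for which there exist $x_n\to x$, $y_n\to y$ with $y_n\in N_{\mathsf{F}}(x_n;C)$ for all $n$, and $N_{\mathsf{L}}(x;C)=\varnothing$ for $x\notin C$. *)

theory Defs
  imports "HOL-Analysis.Analysis" "HOL-Algebra.Group"
begin

definition lin_isometry :: "('a::real_normed_vector \<Rightarrow> 'b::real_normed_vector) \<Rightarrow> bool" where
  "lin_isometry f \<longleftrightarrow> linear f \<and> (\<forall>x. norm (f x) = norm x)"

definition isometric_group_action ::
  "('g, 'm) monoid_scheme \<Rightarrow> ('g \<Rightarrow> 'x::euclidean_space \<Rightarrow> 'x) \<Rightarrow> bool" where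
  "isometric_group_action G act \<longleftrightarrow>
     group G \<and>
     (\<forall>x. act \<one>\<^bsub>G\<^esub> x = x) \<and>
     (\<forall>g\<in>carrier G. \<forall>h\<in>carrier G. \<forall>x. act (g \<otimes>\<^bsub>G\<^esub> h) x = act g (act h x)) \<and>
     (\<forall>g\<in>carrier G. lin_isometry (act g))"

definition spectral_decomposition_system ::
  "('g, 'm) monoid_scheme \<Rightarrow> ('g \<Rightarrow> 'x::euclidean_space \<Rightarrow> 'x) \<Rightarrow> ('h::euclidean_space \<Rightarrow> 'x)
   \<Rightarrow> 'a set \<Rightarrow> ('a \<Rightarrow> 'x \<Rightarrow> 'h) \<Rightarrow> bool" where
  "spectral_decomposition_system G act \<gamma> A \<Lambda> \<longleftrightarrow>
     isometric_group_action G act \<and>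
     (\<forall>a\<in>A. lin_isometry (\<Lambda> a)) \<and>
     (\<exists>\<tau>. (\<forall>g\<in>carrier G. \<forall>x. \<tau> (act g x) = \<tau> x) \<and>
          (\<forall>x. \<exists>g\<in>carrier G. \<tau> x = act g x) \<and>
          (\<forall>a\<in>A. \<gamma> \<circ> \<Lambda> a = \<tau>)) \<and>
     (\<forall>X. \<exists>a\<in>A. X = \<Lambda> a (\<gamma> X)) \<and>
     (\<forall>X Y. inner X Y \<le> inner (\<gamma> X) (\<gamma> Y))"

definition spectral_index_set :: "('h \<Rightarrow> 'x) \<Rightarrow> 'a set \<Rightarrow> ('a \<Rightarrow> 'x \<Rightarrow> 'h) \<Rightarrow> 'h \<Rightarrow> 'a set" where
  "spectral_index_set \<gamma> A \<Lambda> X = {a \<in> A. X = \<Lambda> a (\<gamma> X)}"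

definition S_invariant :: "('g, 'm) monoid_scheme \<Rightarrow> ('g \<Rightarrow> 'x \<Rightarrow> 'x) \<Rightarrow> 'x set \<Rightarrow> bool" where
  "S_invariant G act D \<longleftrightarrow> (\<forall>x\<in>D. \<forall>g\<in>carrier G. act g x \<in> D)"

text \<open>Frechet normal cone (limsup as an extended real; empty limit filter gives -infinity).\<close>
definition frechet_normal_cone :: "'x::euclidean_space \<Rightarrow> 'x set \<Rightarrow> 'x set" where
  "frechet_normal_cone x C =
     (if x \<in> C then
        {y. Limsup (at x within (C - {x})) (\<lambda>z. ereal (inner (z - x) y / norm (z - x))) \<le> 0}
      else {})"

definition limiting_normal_cone :: "'x::euclidean_space \<Rightarrow> 'x set \<Rightarrow> 'x set" where
  "limiting_normal_cone x C =
     (if x \<in> C then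
        {y. \<exists>xs ys. xs \<longlonglongrightarrow> x \<and> ys \<longlonglongrightarrow> y \<and> (\<forall>n. ys n \<in> frechet_normal_cone (xs n) C)}
      else {})"

end

theory Submission
  imports Defs
begin

(* A Frechet normal y to D at w can be stated quantitatively: for every e > 0 there is c with
   <z - w, y> <= e |z - w| + c |z - w|^2 for all z in D. This inequality transfers verbatim to the
   preimage at Lambda_a w. For Z in the preimage, the spectral inequality <Z, Lambda_a u> <= <gamma Z, tau u>
   and the invariance of D give a point p of D in the orbit of gamma Z with |p| = |Z|; taking
   u = y + 2m w with m = c + e / (2 |Z - Lambda_a w|) reduces the claim at Z to the inequality at p.
   Conversely, for a normal V at X pick b_n with X + t_n V = Lambda_(b_n) gamma(X + t_n V). The points
   Lambda_(b_n) gamma(X) lie in the preimage and approach X faster than t_n, so V is the limit of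
   Lambda_(b_n) applied to difference quotients of gamma, and compactness of the family Lambda_a yields
   one a in A_X with V in the range of Lambda_a. The same compactness argument passes to limiting
   normals. *)

lemma lin_isometry_linear: "lin_isometry f \<Longrightarrow> linear f"
  by (simp add: lin_isometry_def)

lemma lin_isometry_norm: "lin_isometry f \<Longrightarrow> norm (f x) = norm x"
  by (simp add: lin_isometry_def)

lemma lin_isometry_inner:
  assumes "lin_isometry f"
  shows "inner (f x) (f y) = inner x y"
proof -
  have "f x - f y = f (x - y)"
    using lin_isometry_linear[OF assms] by (simp add: linear_diff)
  then show ?thesis
    by (simp add: dot_norm_neg[of "f x"] dot_norm_neg[of x] lin_isometry_norm[OF assms])
qed

lemma power2_norm_diff:
  fixes a b :: "'a::real_inner"
  shows "(norm (a - b))\<^sup>2 = (norm a)\<^sup>2 + (norm b)\<^sup>2 - 2 * inner a b"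
  by (simp add: power2_norm_eq_inner inner_diff_left inner_diff_right inner_commute)

lemma Limsup_ereal_nonpos_iff:
  "Limsup F (\<lambda>z. ereal (f z)) \<le> 0 \<longleftrightarrow> (\<forall>e>0. eventually (\<lambda>z. f z \<le> e) F)"
proof
  assume "Limsup F (\<lambda>z. ereal (f z)) \<le> 0"
  then have below: "\<forall>c>0. eventually (\<lambda>z. ereal (f z) < c) F"
    by (simp add: Limsup_le_iff)
  have "eventually (\<lambda>z. f z < e) F" if "e > 0" for e
    using spec[OF below, of "ereal e"] that by simp
  then show "\<forall>e>0. eventually (\<lambda>z. f z \<le> e) F"
    by (metis (mono_tags, lifting) eventually_mono less_imp_le)
next
  assume small: "\<forall>e>0. eventually (\<lambda>z. f z \<le> e) F"
  show "Limsup F (\<lambda>z. ereal (f z)) \<le> 0"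
    unfolding Limsup_le_iff
  proof (intro allI impI)
    fix c :: ereal
    assume "c > 0"
    then show "eventually (\<lambda>z. ereal (f z) < c) F"
    proof (cases c)
      case (real r)
      with \<open>c > 0\<close> have "r > 0"
        by simp
      then have "eventually (\<lambda>z. f z \<le> r / 2) F"
        using small half_gt_zero by blast
      then show ?thesis
        by (rule eventually_mono) (use real \<open>c > 0\<close> in auto)
    qed auto
  qed
qed

lemma frechet_normal_cone_iff:
  "y \<in> frechet_normal_cone x C \<longleftrightarrow>
     x \<in> C \<and> (\<forall>e>0. \<exists>d>0. \<forall>z\<in>C. norm (z - x) < d \<longrightarrow> inner (z - x) y \<le> e * norm (z - x))"
proof -
  have "eventually (\<lambda>z. inner (z - x) y / norm (z - x) \<le> e) (at x within C - {x}) \<longleftrightarrow>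
        (\<exists>d>0. \<forall>z\<in>C. norm (z - x) < d \<longrightarrow> inner (z - x) y \<le> e * norm (z - x))" for e
  proof -
    have "(\<forall>z\<in>C - {x}. z \<noteq> x \<and> norm (z - x) < d \<longrightarrow> inner (z - x) y / norm (z - x) \<le> e) \<longleftrightarrow>
          (\<forall>z\<in>C. norm (z - x) < d \<longrightarrow> inner (z - x) y \<le> e * norm (z - x))" for d
      by (force simp: pos_divide_le_eq)
    then show ?thesis
      unfolding eventually_at dist_norm by simp
  qed
  then show ?thesis
    by (simp add: frechet_normal_cone_def Limsup_ereal_nonpos_iff)
qed

lemma frechet_normal_cone_quadratic_bound:
  assumes y: "y \<in> frechet_normal_cone x C" and "e > 0"
  shows "\<exists>c. \<forall>z\<in>C. inner (z - x) y \<le> e * norm (z - x) + c * (norm (z - x))\<^sup>2"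
proof -
  obtain d where "d > 0"
    and near: "\<forall>z\<in>C. norm (z - x) < d \<longrightarrow> inner (z - x) y \<le> e * norm (z - x)"
    using y \<open>e > 0\<close> frechet_normal_cone_iff by blast
  have "inner (z - x) y \<le> e * norm (z - x) + norm y / d * (norm (z - x))\<^sup>2" if "z \<in> C" for z
  proof (cases "norm (z - x) < d")
    case True
    then show ?thesis
      using near that \<open>d > 0\<close> by (smt (verit) divide_nonneg_pos mult_nonneg_nonneg norm_ge_zero zero_le_power2)
  next
    case False
    have "inner (z - x) y \<le> norm (z - x) * norm y"
      by (rule norm_cauchy_schwarz)
    also have "\<dots> = norm y / d * (d * norm (z - x))"
      using \<open>d > 0\<close> by simp
    also have "\<dots> \<le> norm y / d * (norm (z - x))\<^sup>2"
      using False \<open>d > 0\<close> unfolding power2_eq_square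
      by (intro mult_left_mono mult_right_mono) auto
    finally show ?thesis
      using \<open>e > 0\<close> by (smt (verit) mult_nonneg_nonneg norm_ge_zero)
  qed
  then show ?thesis
    by blast
qed

lemma frechet_normal_coneI_quadratic:
  assumes "x \<in> C"
    and bound: "\<And>e. e > 0 \<Longrightarrow> \<exists>c. \<forall>z\<in>C. inner (z - x) y \<le> e * norm (z - x) + c * (norm (z - x))\<^sup>2"
  shows "y \<in> frechet_normal_cone x C"
proof -
  have "\<exists>d>0. \<forall>z\<in>C. norm (z - x) < d \<longrightarrow> inner (z - x) y \<le> e * norm (z - x)" if "e > 0" for e
  proof -
    obtain c where c: "\<forall>z\<in>C. inner (z - x) y \<le> e / 2 * norm (z - x) + c * (norm (z - x))\<^sup>2"
      using bound \<open>e > 0\<close> half_gt_zero by blast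
    have "inner (z - x) y \<le> e * norm (z - x)"
      if "z \<in> C" and near: "norm (z - x) < e / (2 * (\<bar>c\<bar> + 1))" for z
    proof -
      have "2 * norm (z - x) + \<bar>c\<bar> * (2 * norm (z - x)) < e"
        using near by (simp add: field_simps)
      then have "\<bar>c\<bar> * norm (z - x) \<le> e / 2"
        using norm_ge_zero[of "z - x"] by linarith
      then have "c * (norm (z - x))\<^sup>2 \<le> e / 2 * norm (z - x)"
        unfolding power2_eq_square
        by (smt (verit) abs_ge_self mult_right_mono norm_ge_zero mult.assoc)
      then show ?thesis
        using c that(1) by fastforce
    qed
    then show ?thesis
      using \<open>e > 0\<close> by (intro exI[of _ "e / (2 * (\<bar>c\<bar> + 1))"]) auto
  qed
  then show ?thesis
    using \<open>x \<in> C\<close> frechet_normal_cone_iff by blast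
qed

lemma frechet_normal_cone_iff_quadratic:
  "y \<in> frechet_normal_cone x C \<longleftrightarrow>
     x \<in> C \<and> (\<forall>e>0. \<exists>c. \<forall>z\<in>C. inner (z - x) y \<le> e * norm (z - x) + c * (norm (z - x))\<^sup>2)"
  using frechet_normal_cone_quadratic_bound frechet_normal_coneI_quadratic frechet_normal_cone_iff
  by blast

lemma norm_le_if_power2_le_inner:
  fixes v y :: "'a::real_inner"
  assumes "(norm v)\<^sup>2 \<le> t * inner v y" and "inner v y \<le> k * norm v" and "t \<ge> 0" and "k \<ge> 0"
  shows "norm v \<le> t * k"
proof (cases "v = 0")
  case True
  then show ?thesis
    using assms by simp
next
  case False
  have "norm v * norm v \<le> (t * k) * norm v"
    using assms(1) mult_left_mono[OF assms(2,3)] by (simp add: power2_eq_square mult.assoc)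
  then show ?thesis
    using False by simp
qed

lemma frechet_normal_cone_scaled_tendsto_zero:
  fixes t :: "nat \<Rightarrow> real"
  assumes y: "y \<in> frechet_normal_cone x C"
    and z: "\<And>n. z n \<in> C"
    and t: "t \<longlonglongrightarrow> 0" "\<And>n. t n > 0"
    and quadratic: "\<And>n. (norm (z n - x))\<^sup>2 \<le> t n * inner (z n - x) y"
  shows "(\<lambda>n. norm (z n - x) / t n) \<longlonglongrightarrow> 0"
proof -
  have bound: "norm (z n - x) \<le> t n * k"
    if "inner (z n - x) y \<le> k * norm (z n - x)" and "k \<ge> 0" for n k
    using norm_le_if_power2_le_inner[OF quadratic that(1) less_imp_le[OF t(2)] that(2)] .
  have "(\<lambda>n. z n - x) \<longlonglongrightarrow> 0"
  proof (rule Lim_null_comparison)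
    have "norm (z n - x) \<le> t n * norm y" for n
      using bound[of n "norm y"] norm_cauchy_schwarz[of "z n - x" y] by (simp add: mult.commute)
    then show "\<forall>\<^sub>F n in sequentially. norm (z n - x) \<le> t n * norm y"
      by simp
    show "(\<lambda>n. t n * norm y) \<longlonglongrightarrow> 0"
      using tendsto_mult_left_zero[OF t(1)] .
  qed
  then have z_lim: "(\<lambda>n. norm (z n - x)) \<longlonglongrightarrow> 0"
    using tendsto_norm_zero by blast
  show ?thesis
  proof (rule order_tendstoI)
    fix e :: real
    assume "e > 0"
    obtain d where "d > 0"
      and near: "\<forall>w\<in>C. norm (w - x) < d \<longrightarrow> inner (w - x) y \<le> e / 2 * norm (w - x)"
      using y \<open>e > 0\<close> frechet_normal_cone_iff half_gt_zero by metis
    have "eventually (\<lambda>n. norm (z n - x) < d) sequentially"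
      using order_tendstoD(2)[OF z_lim \<open>d > 0\<close>] .
    then show "eventually (\<lambda>n. norm (z n - x) / t n < e) sequentially"
    proof (rule eventually_mono)
      fix n
      assume "norm (z n - x) < d"
      then have "norm (z n - x) \<le> t n * (e / 2)"
        using bound[of n "e / 2"] near z[of n] \<open>e > 0\<close> by simp
      then show "norm (z n - x) / t n < e"
        using mult_pos_pos[OF t(2)[of n] \<open>e > 0\<close>] t(2)[of n] by (simp add: divide_less_eq mult.commute)
    qed
  next
    fix e :: real
    assume "e < 0"
    then show "eventually (\<lambda>n. e < norm (z n - x) / t n) sequentially"
      using t(2) by (simp add: less_le_trans[OF _ divide_nonneg_pos])
  qed
qed

locale spectral_system =
  fixes G :: "('g, 'm) monoid_scheme"
    and act :: "'g \<Rightarrow> 'x::euclidean_space \<Rightarrow> 'x"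
    and \<gamma> :: "'h::euclidean_space \<Rightarrow> 'x"
    and A :: "'a set"
    and \<Lambda> :: "'a \<Rightarrow> 'x \<Rightarrow> 'h"
  assumes action: "isometric_group_action G act"
    and Lambda_isometry: "\<And>a. a \<in> A \<Longrightarrow> lin_isometry (\<Lambda> a)"
    and gamma_Lambda_orbit: "\<And>a x. a \<in> A \<Longrightarrow> \<exists>g\<in>carrier G. \<gamma> (\<Lambda> a x) = act g x"
    and decomposition: "\<And>X. \<exists>a\<in>A. X = \<Lambda> a (\<gamma> X)"
    and inner_le_inner_gamma: "\<And>X Y. inner X Y \<le> inner (\<gamma> X) (\<gamma> Y)"
begin

lemma act_isometry: "g \<in> carrier G \<Longrightarrow> lin_isometry (act g)"
  using action by (simp add: isometric_group_action_def)

lemma inv_closed: "g \<in> carrier G \<Longrightarrow> inv\<^bsub>G\<^esub> g \<in> carrier G"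
  using action by (simp add: isometric_group_action_def group.inv_closed)

lemma act_inv_cancel:
  assumes g: "g \<in> carrier G"
  shows "act (inv\<^bsub>G\<^esub> g) (act g x) = x"
proof -
  have "act (inv\<^bsub>G\<^esub> g) (act g x) = act (inv\<^bsub>G\<^esub> g \<otimes>\<^bsub>G\<^esub> g) x"
    using action inv_closed[OF g] g by (simp add: isometric_group_action_def)
  also have "\<dots> = x"
    using action g by (simp add: isometric_group_action_def group.l_inv)
  finally show ?thesis .
qed

lemma inner_Lambda: "a \<in> A \<Longrightarrow> inner (\<Lambda> a x) (\<Lambda> a y) = inner x y"
  by (simp add: Lambda_isometry lin_isometry_inner)

lemma norm_Lambda: "a \<in> A \<Longrightarrow> norm (\<Lambda> a x) = norm x"
  by (simp add: Lambda_isometry lin_isometry_norm)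

lemma linear_Lambda: "a \<in> A \<Longrightarrow> linear (\<Lambda> a)"
  by (simp add: Lambda_isometry lin_isometry_linear)

lemma Blinfun_Lambda: "a \<in> A \<Longrightarrow> blinfun_apply (Blinfun (\<Lambda> a)) = \<Lambda> a"
  using linear_Lambda by (simp add: linear_conv_bounded_linear bounded_linear_Blinfun_apply)

lemma norm_gamma: "norm (\<gamma> X) = norm X"
  using decomposition[of X] norm_Lambda by metis

lemma gamma_nonexpansive: "dist (\<gamma> X) (\<gamma> Y) \<le> dist X Y"
proof -
  have "(dist (\<gamma> X) (\<gamma> Y))\<^sup>2 = (norm X)\<^sup>2 + (norm Y)\<^sup>2 - 2 * inner (\<gamma> X) (\<gamma> Y)"
    by (simp only: dist_norm power2_norm_diff norm_gamma)
  also have "\<dots> \<le> (norm X)\<^sup>2 + (norm Y)\<^sup>2 - 2 * inner X Y"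
    using inner_le_inner_gamma[of X Y] by linarith
  also have "\<dots> = (dist X Y)\<^sup>2"
    by (simp only: dist_norm power2_norm_diff)
  finally show ?thesis
    by (rule power2_le_imp_le) simp
qed

lemma tendsto_gamma: "(f \<longlongrightarrow> X) F \<Longrightarrow> ((\<lambda>n. \<gamma> (f n)) \<longlongrightarrow> \<gamma> X) F"
  using gamma_nonexpansive
  by (intro continuous_on_tendsto_compose[of UNIV \<gamma>] lipschitz_on_continuous_on[of 1])
    (auto intro: lipschitz_onI)

lemma inner_Lambda_le_orbit:
  assumes "a \<in> A"
  shows "\<exists>g\<in>carrier G. inner Z (\<Lambda> a u) \<le> inner (act g (\<gamma> Z)) u"
proof -
  obtain h where h: "h \<in> carrier G" "\<gamma> (\<Lambda> a u) = act h u"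
    using gamma_Lambda_orbit[OF assms] by blast
  have "inner Z (\<Lambda> a u) \<le> inner (\<gamma> Z) (act h u)"
    using inner_le_inner_gamma h by metis
  also have "\<dots> = inner (act (inv\<^bsub>G\<^esub> h) (\<gamma> Z)) u"
    using lin_isometry_inner[OF act_isometry[OF inv_closed[OF h(1)]], of "\<gamma> Z" "act h u"]
    by (simp add: act_inv_cancel h(1))
  finally show ?thesis
    using inv_closed[OF h(1)] by blast
qed

lemma norm_Lambda_gamma_diff_le:
  assumes b: "b \<in> A" and Y: "Y = \<Lambda> b (\<gamma> Y)"
  shows "(norm (\<Lambda> b (\<gamma> X) - X))\<^sup>2 \<le> 2 * inner (\<Lambda> b (\<gamma> X) - X) (Y - X)"
proof -
  define Z where "Z = \<Lambda> b (\<gamma> X)"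
  have "inner Z Y = inner (\<gamma> X) (\<gamma> Y)"
    unfolding Z_def by (subst Y) (simp add: inner_Lambda b)
  then have "inner X Y \<le> inner Z Y"
    using inner_le_inner_gamma by simp
  moreover have "(norm (Z - X))\<^sup>2 = 2 * (norm X)\<^sup>2 - 2 * inner Z X"
    by (simp add: power2_norm_diff Z_def norm_Lambda b norm_gamma)
  moreover have "inner (Z - X) (Y - X) = inner Z Y - inner Z X - inner X Y + (norm X)\<^sup>2"
    by (simp add: inner_diff_left inner_diff_right inner_commute power2_norm_eq_inner)
  ultimately show ?thesis
    unfolding Z_def[symmetric] by linarith
qed

lemma tendsto_Lambda: "a \<in> A \<Longrightarrow> (f \<longlongrightarrow> x) F \<Longrightarrow> ((\<lambda>n. \<Lambda> a (f n)) \<longlongrightarrow> \<Lambda> a x) F"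
  using linear_Lambda by (simp add: linear_conv_bounded_linear bounded_linear.tendsto)

context
  fixes D :: "'x set"
  assumes D: "S_invariant G act D"
begin

lemma gamma_Lambda_in_iff: "a \<in> A \<Longrightarrow> \<gamma> (\<Lambda> a w) \<in> D \<longleftrightarrow> w \<in> D"
  using D gamma_Lambda_orbit act_inv_cancel inv_closed unfolding S_invariant_def by metis

lemma penalized_inner_Lambda_le:
  assumes a: "a \<in> A" and Z: "\<gamma> Z \<in> D"
  obtains p where "p \<in> D"
    and "inner (Z - \<Lambda> a w) (\<Lambda> a y) - m * (norm (Z - \<Lambda> a w))\<^sup>2 \<le> inner (p - w) y - m * (norm (p - w))\<^sup>2"
proof -
  define u where "u = y + (2 * m) *\<^sub>R w"
  obtain g where g: "g \<in> carrier G" and le: "inner Z (\<Lambda> a u) \<le> inner (act g (\<gamma> Z)) u"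
    using inner_Lambda_le_orbit[OF a] by blast
  define p where "p = act g (\<gamma> Z)"
  have "p \<in> D"
    using D Z g by (simp add: p_def S_invariant_def)
  have norm_p: "norm p = norm Z"
    by (simp add: p_def lin_isometry_norm[OF act_isometry[OF g]] norm_gamma)
  define N where "N = (norm p)\<^sup>2 + (norm w)\<^sup>2"
  have "inner (Z - \<Lambda> a w) (\<Lambda> a y) - m * (norm (Z - \<Lambda> a w))\<^sup>2
        = inner Z (\<Lambda> a y) - inner w y - m * (N - 2 * inner Z (\<Lambda> a w))"
    by (simp add: N_def power2_norm_diff inner_diff_left inner_Lambda[OF a] norm_Lambda[OF a] norm_p)
  also have "\<dots> = inner Z (\<Lambda> a u) - inner w y - m * N"
    using linear_Lambda[OF a]
    by (simp add: u_def linear_add linear_scale inner_add_right algebra_simps)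
  also have "\<dots> \<le> inner p u - inner w y - m * N"
    using le by (simp add: p_def)
  also have "\<dots> = inner p y - inner w y - m * (N - 2 * inner p w)"
    by (simp add: u_def inner_add_right algebra_simps)
  also have "\<dots> = inner (p - w) y - m * (norm (p - w))\<^sup>2"
    by (simp add: N_def power2_norm_diff inner_diff_left)
  finally have "inner (Z - \<Lambda> a w) (\<Lambda> a y) - m * (norm (Z - \<Lambda> a w))\<^sup>2
      \<le> inner (p - w) y - m * (norm (p - w))\<^sup>2" .
  then show ?thesis
    using that \<open>p \<in> D\<close> by blast
qed

lemma inner_Lambda_quadratic_bound:
  assumes a: "a \<in> A" and Z: "\<gamma> Z \<in> D" and "e > 0"
    and bound: "\<And>z. z \<in> D \<Longrightarrow> inner (z - w) y \<le> e * norm (z - w) + c * (norm (z - w))\<^sup>2"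
  shows "inner (Z - \<Lambda> a w) (\<Lambda> a y) \<le> e * norm (Z - \<Lambda> a w) + c * (norm (Z - \<Lambda> a w))\<^sup>2"
proof (cases "Z = \<Lambda> a w")
  case False
  define \<rho> where "\<rho> = norm (Z - \<Lambda> a w)"
  define k where "k = e / (2 * \<rho>)"
  have "\<rho> > 0" "k > 0"
    using False \<open>e > 0\<close> by (simp_all add: \<rho>_def k_def)
  obtain p where "p \<in> D" and penalized:
    "inner (Z - \<Lambda> a w) (\<Lambda> a y) - (c + k) * \<rho>\<^sup>2 \<le> inner (p - w) y - (c + k) * (norm (p - w))\<^sup>2"
    using penalized_inner_Lambda_le[OF a Z] unfolding \<rho>_def by blast
  define s where "s = norm (p - w)"
  have "inner (p - w) y - (c + k) * s\<^sup>2 \<le> e * s - k * s\<^sup>2"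
    using bound[OF \<open>p \<in> D\<close>] by (simp add: s_def algebra_simps)
  also have "\<dots> = e / 2 * \<rho> - k * (\<rho> - s)\<^sup>2"
    using \<open>\<rho> > 0\<close> by (simp add: k_def power2_eq_square field_simps)
  also have "\<dots> \<le> e / 2 * \<rho>"
    using \<open>k > 0\<close> by simp
  finally have "inner (Z - \<Lambda> a w) (\<Lambda> a y) \<le> (c + k) * \<rho>\<^sup>2 + e / 2 * \<rho>"
    using penalized unfolding s_def by linarith
  moreover have "(c + k) * \<rho>\<^sup>2 = c * \<rho>\<^sup>2 + e / 2 * \<rho>"
    using \<open>\<rho> > 0\<close> by (simp add: k_def power2_eq_square distrib_right)
  ultimately show ?thesis
    unfolding \<rho>_def[symmetric] by linarith
qed simp

lemma frechet_normal_cone_Lambda: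
  assumes a: "a \<in> A" and y: "y \<in> frechet_normal_cone w D"
  shows "\<Lambda> a y \<in> frechet_normal_cone (\<Lambda> a w) (\<gamma> -` D)"
proof -
  have "w \<in> D"
    and bound: "\<forall>e>0. \<exists>c. \<forall>z\<in>D. inner (z - w) y \<le> e * norm (z - w) + c * (norm (z - w))\<^sup>2"
    using y unfolding frechet_normal_cone_iff_quadratic by auto
  have "\<exists>c. \<forall>Z\<in>\<gamma> -` D. inner (Z - \<Lambda> a w) (\<Lambda> a y)
          \<le> e * norm (Z - \<Lambda> a w) + c * (norm (Z - \<Lambda> a w))\<^sup>2" if "e > 0" for e
    using bound inner_Lambda_quadratic_bound[OF a _ that] that by (metis vimageE)
  then show ?thesis
    using \<open>w \<in> D\<close> gamma_Lambda_in_iff[OF a] unfolding frechet_normal_cone_iff_quadratic by simp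
qed

lemma frechet_normal_cone_Lambda_iff:
  assumes a: "a \<in> A"
  shows "\<Lambda> a y \<in> frechet_normal_cone (\<Lambda> a w) (\<gamma> -` D) \<longleftrightarrow> y \<in> frechet_normal_cone w D"
proof
  assume normal: "\<Lambda> a y \<in> frechet_normal_cone (\<Lambda> a w) (\<gamma> -` D)"
  have diff: "\<Lambda> a z - \<Lambda> a w = \<Lambda> a (z - w)" for z
    using linear_Lambda[OF a] by (simp add: linear_diff)
  have "w \<in> D"
    using normal gamma_Lambda_in_iff[OF a, of w] unfolding frechet_normal_cone_iff by simp
  moreover have "\<exists>d>0. \<forall>z\<in>D. norm (z - w) < d \<longrightarrow> inner (z - w) y \<le> e * norm (z - w)"
    if "e > 0" for e
  proof -
    obtain d where "d > 0" and near: "\<forall>Z\<in>\<gamma> -` D. norm (Z - \<Lambda> a w) < d \<longrightarrow>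
        inner (Z - \<Lambda> a w) (\<Lambda> a y) \<le> e * norm (Z - \<Lambda> a w)"
      using normal \<open>e > 0\<close> frechet_normal_cone_iff by metis
    have "inner (z - w) y \<le> e * norm (z - w)" if "z \<in> D" "norm (z - w) < d" for z
      using near[rule_format, of "\<Lambda> a z"] that gamma_Lambda_in_iff[OF a]
      by (simp add: diff inner_Lambda[OF a] norm_Lambda[OF a])
    then show ?thesis
      using \<open>d > 0\<close> by blast
  qed
  ultimately show "y \<in> frechet_normal_cone w D"
    by (simp add: frechet_normal_cone_iff)
qed (rule frechet_normal_cone_Lambda[OF a])

end

end

locale closed_spectral_system = spectral_system G act \<gamma> A \<Lambda>
  for G :: "('g, 'm) monoid_scheme"
    and act :: "'g \<Rightarrow> 'x::euclidean_space \<Rightarrow> 'x"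
    and \<gamma> :: "'h::euclidean_space \<Rightarrow> 'x"
    and A :: "'a set"
    and \<Lambda> :: "'a \<Rightarrow> 'x \<Rightarrow> 'h" +
  assumes closed_Lambda_operators: "closed ((\<lambda>a. Blinfun (\<Lambda> a)) ` A)"
begin

lemma compact_Lambda_operators: "compact ((\<lambda>a. Blinfun (\<Lambda> a)) ` A)"
proof -
  have "norm (Blinfun (\<Lambda> a)) \<le> 1" if "a \<in> A" for a
    by (rule norm_blinfun_bound) (simp_all add: Blinfun_Lambda[OF that] norm_Lambda[OF that])
  then have "bounded ((\<lambda>a. Blinfun (\<Lambda> a)) ` A)"
    unfolding bounded_iff by blast
  then show ?thesis
    using closed_Lambda_operators compact_eq_bounded_closed by blast
qed

lemma Lambda_subseq_limit:
  assumes b: "\<And>n. b n \<in> A" and u: "u \<longlonglongrightarrow> u0"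
    and Lu: "(\<lambda>n. \<Lambda> (b n) (u n)) \<longlonglongrightarrow> U" and Lw: "(\<lambda>n. \<Lambda> (b n) (w n)) \<longlonglongrightarrow> W"
  obtains b0 w0 r where "b0 \<in> A" "strict_mono r" "(w \<circ> r) \<longlonglongrightarrow> w0" "U = \<Lambda> b0 u0" "W = \<Lambda> b0 w0"
proof -
  obtain M where M: "\<And>n. norm (\<Lambda> (b n) (w n)) \<le> M"
    using convergent_imp_Bseq[OF convergentI[OF Lw]] unfolding Bseq_def by blast
  let ?K = "(\<lambda>a. Blinfun (\<Lambda> a)) ` A \<times> cball (0 :: 'x) M"
  have "seq_compact ?K"
    by (rule compact_imp_seq_compact[OF compact_Times[OF compact_Lambda_operators compact_cball]])
  moreover have "\<forall>n. (Blinfun (\<Lambda> (b n)), w n) \<in> ?K"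
    using b M norm_Lambda by auto
  ultimately obtain l r where "l \<in> ?K" and r: "strict_mono r"
    and lim: "((\<lambda>n. (Blinfun (\<Lambda> (b n)), w n)) \<circ> r) \<longlonglongrightarrow> l"
    by (rule seq_compactE)
  then obtain b0 w0 where "b0 \<in> A" and l: "l = (Blinfun (\<Lambda> b0), w0)"
    by auto
  have ops: "(\<lambda>n. Blinfun (\<Lambda> (b (r n)))) \<longlonglongrightarrow> Blinfun (\<Lambda> b0)" and w: "(w \<circ> r) \<longlonglongrightarrow> w0"
    using tendsto_fst[OF lim] tendsto_snd[OF lim] by (simp_all add: l o_def)
  have apply_lim: "(\<lambda>n. \<Lambda> (b (r n)) (f n)) \<longlonglongrightarrow> \<Lambda> b0 f0" if "f \<longlonglongrightarrow> f0" for f f0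
    using blinfun.tendsto[OF ops that] by (simp add: Blinfun_Lambda b \<open>b0 \<in> A\<close>)
  have "(\<lambda>n. \<Lambda> (b (r n)) (u (r n))) \<longlonglongrightarrow> \<Lambda> b0 u0"
    using apply_lim[OF LIMSEQ_subseq_LIMSEQ[OF u r, unfolded o_def]] .
  moreover have "(\<lambda>n. \<Lambda> (b (r n)) (u (r n))) \<longlonglongrightarrow> U"
    using LIMSEQ_subseq_LIMSEQ[OF Lu r] by (simp add: o_def)
  moreover have "(\<lambda>n. \<Lambda> (b (r n)) (w (r n))) \<longlonglongrightarrow> \<Lambda> b0 w0"
    using apply_lim[OF w[unfolded o_def]] .
  moreover have "(\<lambda>n. \<Lambda> (b (r n)) (w (r n))) \<longlonglongrightarrow> W"
    using LIMSEQ_subseq_LIMSEQ[OF Lw r] by (simp add: o_def)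
  ultimately show ?thesis
    using that[OF \<open>b0 \<in> A\<close> r w] LIMSEQ_unique by blast
qed

context
  fixes D :: "'x set"
  assumes D: "S_invariant G act D"
begin

lemma Lambda_gamma_diff_quotient_tendsto_zero:
  assumes V: "V \<in> frechet_normal_cone X (\<gamma> -` D)"
    and t: "t \<longlonglongrightarrow> 0" "\<And>n. t n > 0"
    and b: "\<And>n. b n \<in> A" and Y: "\<And>n. X + t n *\<^sub>R V = \<Lambda> (b n) (\<gamma> (X + t n *\<^sub>R V))"
  shows "(\<lambda>n. (1 / t n) *\<^sub>R (\<Lambda> (b n) (\<gamma> X) - X)) \<longlonglongrightarrow> 0"
proof -
  define Z where "Z n = \<Lambda> (b n) (\<gamma> X)" for n
  have "\<gamma> X \<in> D"
    using V by (simp add: frechet_normal_cone_iff)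
  then have "Z n \<in> \<gamma> -` D" for n
    using gamma_Lambda_in_iff[OF D b] by (simp add: Z_def)
  moreover have "(norm (Z n - X))\<^sup>2 \<le> (2 * t n) * inner (Z n - X) V" for n
    using norm_Lambda_gamma_diff_le[OF b Y, where X = X] by (simp add: Z_def mult.assoc)
  ultimately have "(\<lambda>n. norm (Z n - X) / (2 * t n)) \<longlonglongrightarrow> 0"
    using t by (intro frechet_normal_cone_scaled_tendsto_zero[OF V]) (auto simp: tendsto_mult_right_zero)
  then have "(\<lambda>n. 2 * (norm (Z n - X) / (2 * t n))) \<longlonglongrightarrow> 0"
    by (rule tendsto_mult_right_zero)
  moreover have "norm ((1 / t n) *\<^sub>R (Z n - X)) = 2 * (norm (Z n - X) / (2 * t n))" for n
    using t(2)[of n] by simp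
  ultimately have "(\<lambda>n. norm ((1 / t n) *\<^sub>R (Z n - X))) \<longlonglongrightarrow> 0"
    by (simp only:)
  then show ?thesis
    unfolding Z_def by (rule tendsto_norm_zero_cancel)
qed

lemma frechet_normal_cone_preimage_in_Lambda_range:
  assumes V: "V \<in> frechet_normal_cone X (\<gamma> -` D)"
  obtains b v where "b \<in> spectral_index_set \<gamma> A \<Lambda> X" "V = \<Lambda> b v"
proof -
  define t :: "nat \<Rightarrow> real" where "t n = inverse (real (Suc n))" for n
  have t: "t \<longlonglongrightarrow> 0" "\<And>n. t n > 0"
    unfolding t_def by (rule LIMSEQ_inverse_real_of_nat) simp
  define Y where "Y n = X + t n *\<^sub>R V" for n
  have "\<forall>n. \<exists>a. a \<in> A \<and> Y n = \<Lambda> a (\<gamma> (Y n))"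
    using decomposition by blast
  then obtain b where b: "\<And>n. b n \<in> A" and Y: "\<And>n. Y n = \<Lambda> (b n) (\<gamma> (Y n))"
    using choice[of "\<lambda>n a. a \<in> A \<and> Y n = \<Lambda> a (\<gamma> (Y n))"] by blast
  have quotient: "(\<lambda>n. (1 / t n) *\<^sub>R (\<Lambda> (b n) (\<gamma> X) - X)) \<longlonglongrightarrow> 0"
    using Y unfolding Y_def by (rule Lambda_gamma_diff_quotient_tendsto_zero[where b = b, OF V t b])
  define v where "v n = (1 / t n) *\<^sub>R (\<gamma> (Y n) - \<gamma> X)" for n
  have "\<Lambda> (b n) (v n) = V - (1 / t n) *\<^sub>R (\<Lambda> (b n) (\<gamma> X) - X)" for n
  proof -
    have "\<Lambda> (b n) (v n) = (1 / t n) *\<^sub>R (Y n - \<Lambda> (b n) (\<gamma> X))"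
      using linear_Lambda[OF b] Y[of n, symmetric] by (simp add: v_def linear_scale linear_diff)
    also have "\<dots> = V - (1 / t n) *\<^sub>R (\<Lambda> (b n) (\<gamma> X) - X)"
      using t(2)[of n] by (simp add: Y_def algebra_simps)
    finally show ?thesis .
  qed
  then have LV: "(\<lambda>n. \<Lambda> (b n) (v n)) \<longlonglongrightarrow> V"
    using tendsto_diff[OF tendsto_const quotient, of V] by simp
  have Y_lim: "Y \<longlonglongrightarrow> X"
    using tendsto_add[OF tendsto_const tendsto_scaleR[OF t(1) tendsto_const], of X V]
    by (simp add: Y_def[abs_def])
  then have LX: "(\<lambda>n. \<Lambda> (b n) (\<gamma> (Y n))) \<longlonglongrightarrow> X"
    by (simp flip: Y)
  obtain b0 v0 r where "b0 \<in> A" "strict_mono r" "(v \<circ> r) \<longlonglongrightarrow> v0" "X = \<Lambda> b0 (\<gamma> X)" "V = \<Lambda> b0 v0"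
    by (rule Lambda_subseq_limit[of b, OF b tendsto_gamma[OF Y_lim] LX LV])
  then show ?thesis
    using that unfolding spectral_index_set_def by blast
qed

lemma frechet_normal_cone_preimage:
  "frechet_normal_cone X (\<gamma> -` D) =
     {\<Lambda> a y | y a. y \<in> frechet_normal_cone (\<gamma> X) D \<and> a \<in> spectral_index_set \<gamma> A \<Lambda> X}"
proof (intro equalityI subsetI)
  fix V
  assume V: "V \<in> frechet_normal_cone X (\<gamma> -` D)"
  then obtain b v where b: "b \<in> A" "X = \<Lambda> b (\<gamma> X)" and v: "V = \<Lambda> b v"
    using frechet_normal_cone_preimage_in_Lambda_range unfolding spectral_index_set_def by blast
  have "\<Lambda> b v \<in> frechet_normal_cone (\<Lambda> b (\<gamma> X)) (\<gamma> -` D)"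
    using V by (simp add: b(2)[symmetric] v)
  then have "v \<in> frechet_normal_cone (\<gamma> X) D"
    by (simp add: frechet_normal_cone_Lambda_iff[OF D b(1)])
  then show "V \<in> {\<Lambda> a y | y a. y \<in> frechet_normal_cone (\<gamma> X) D \<and> a \<in> spectral_index_set \<gamma> A \<Lambda> X}"
    using b v by (auto simp: spectral_index_set_def)
next
  fix V
  assume "V \<in> {\<Lambda> a y | y a. y \<in> frechet_normal_cone (\<gamma> X) D \<and> a \<in> spectral_index_set \<gamma> A \<Lambda> X}"
  then obtain y a where V: "V = \<Lambda> a y" and y: "y \<in> frechet_normal_cone (\<gamma> X) D"
    and a: "a \<in> A" "X = \<Lambda> a (\<gamma> X)"
    by (auto simp: spectral_index_set_def)
  have "\<Lambda> a y \<in> frechet_normal_cone (\<Lambda> a (\<gamma> X)) (\<gamma> -` D)"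
    using y by (simp add: frechet_normal_cone_Lambda_iff[OF D a(1)])
  then show "V \<in> frechet_normal_cone X (\<gamma> -` D)"
    by (simp add: a(2)[symmetric] V)
qed

lemma limiting_normal_cone_preimage_subset:
  "limiting_normal_cone X (\<gamma> -` D) \<subseteq>
     {\<Lambda> a y | y a. y \<in> limiting_normal_cone (\<gamma> X) D \<and> a \<in> spectral_index_set \<gamma> A \<Lambda> X}"
proof
  fix V
  assume "V \<in> limiting_normal_cone X (\<gamma> -` D)"
  then obtain xs ys where "\<gamma> X \<in> D" and xs: "xs \<longlonglongrightarrow> X" and ys: "ys \<longlonglongrightarrow> V"
    and normal: "\<And>n. ys n \<in> frechet_normal_cone (xs n) (\<gamma> -` D)"
    by (auto simp: limiting_normal_cone_def split: if_splits)
  have "\<forall>n. \<exists>b v. (b \<in> A \<and> xs n = \<Lambda> b (\<gamma> (xs n))) \<and>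
               v \<in> frechet_normal_cone (\<gamma> (xs n)) D \<and> ys n = \<Lambda> b v"
    using normal frechet_normal_cone_preimage unfolding spectral_index_set_def by blast
  then obtain b v where b: "\<And>n. b n \<in> A" and xs_eq: "\<And>n. xs n = \<Lambda> (b n) (\<gamma> (xs n))"
    and v: "\<And>n. v n \<in> frechet_normal_cone (\<gamma> (xs n)) D" and ys_eq: "\<And>n. ys n = \<Lambda> (b n) (v n)"
    by metis
  have "(\<lambda>n. \<Lambda> (b n) (\<gamma> (xs n))) \<longlonglongrightarrow> X" "(\<lambda>n. \<Lambda> (b n) (v n)) \<longlonglongrightarrow> V"
    using xs ys by (simp_all flip: xs_eq ys_eq)
  then obtain b0 v0 r where "b0 \<in> A" "strict_mono r" "(v \<circ> r) \<longlonglongrightarrow> v0"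
    and "X = \<Lambda> b0 (\<gamma> X)" "V = \<Lambda> b0 v0"
    using Lambda_subseq_limit[of b, OF b tendsto_gamma[OF xs]] by blast
  moreover have "v0 \<in> limiting_normal_cone (\<gamma> X) D"
    using \<open>\<gamma> X \<in> D\<close> LIMSEQ_subseq_LIMSEQ[OF tendsto_gamma[OF xs] \<open>strict_mono r\<close>]
      \<open>(v \<circ> r) \<longlonglongrightarrow> v0\<close> v
    unfolding limiting_normal_cone_def o_def by auto
  ultimately show "V \<in> {\<Lambda> a y | y a. y \<in> limiting_normal_cone (\<gamma> X) D \<and> a \<in> spectral_index_set \<gamma> A \<Lambda> X}"
    unfolding spectral_index_set_def by blast
qed

lemma limiting_normal_cone_preimage_supset:
  "{\<Lambda> a y | y a. y \<in> limiting_normal_cone (\<gamma> X) D \<and> a \<in> spectral_index_set \<gamma> A \<Lambda> X} \<subseteq>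
     limiting_normal_cone X (\<gamma> -` D)"
proof
  fix V
  assume "V \<in> {\<Lambda> a y | y a. y \<in> limiting_normal_cone (\<gamma> X) D \<and> a \<in> spectral_index_set \<gamma> A \<Lambda> X}"
  then obtain y a where V: "V = \<Lambda> a y" and y: "y \<in> limiting_normal_cone (\<gamma> X) D"
    and a: "a \<in> A" "X = \<Lambda> a (\<gamma> X)"
    by (auto simp: spectral_index_set_def)
  then obtain xs ys where "\<gamma> X \<in> D" and xs: "xs \<longlonglongrightarrow> \<gamma> X" and ys: "ys \<longlonglongrightarrow> y"
    and normal: "\<And>n. ys n \<in> frechet_normal_cone (xs n) D"
    by (auto simp: limiting_normal_cone_def split: if_splits)
  have "(\<lambda>n. \<Lambda> a (xs n)) \<longlonglongrightarrow> X" "(\<lambda>n. \<Lambda> a (ys n)) \<longlonglongrightarrow> V"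
    using tendsto_Lambda[OF a(1) xs] tendsto_Lambda[OF a(1) ys] by (simp_all add: V flip: a(2))
  moreover have "\<Lambda> a (ys n) \<in> frechet_normal_cone (\<Lambda> a (xs n)) (\<gamma> -` D)" for n
    using normal by (simp add: frechet_normal_cone_Lambda_iff[OF D a(1)])
  ultimately show "V \<in> limiting_normal_cone X (\<gamma> -` D)"
    using \<open>\<gamma> X \<in> D\<close> unfolding limiting_normal_cone_def by auto
qed

lemma limiting_normal_cone_preimage:
  "limiting_normal_cone X (\<gamma> -` D) =
     {\<Lambda> a y | y a. y \<in> limiting_normal_cone (\<gamma> X) D \<and> a \<in> spectral_index_set \<gamma> A \<Lambda> X}"
  using limiting_normal_cone_preimage_subset limiting_normal_cone_preimage_supset by (rule equalityI)

end

end

theorem proposition3p4: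
  fixes G :: "('g, 'm) monoid_scheme"
    and act :: "'g \<Rightarrow> 'x::euclidean_space \<Rightarrow> 'x"
    and \<gamma> :: "'h::euclidean_space \<Rightarrow> 'x"
    and A :: "'a set"
    and \<Lambda> :: "'a \<Rightarrow> 'x \<Rightarrow> 'h"
    and D :: "'x set"
    and X :: 'h
  assumes "spectral_decomposition_system G act \<gamma> A \<Lambda>"
    and "closed ((\<lambda>a. Blinfun (\<Lambda> a)) ` A)"
    and "D \<noteq> {}"
    and "S_invariant G act D"
  shows "(frechet_normal_cone X (\<gamma> -` D) =
           {\<Lambda> a y | y a. y \<in> frechet_normal_cone (\<gamma> X) D \<and> a \<in> spectral_index_set \<gamma> A \<Lambda> X}) \<and>
         (limiting_normal_cone X (\<gamma> -` D) =
           {\<Lambda> a y | y a. y \<in> limiting_normal_cone (\<gamma> X) D \<and> a \<in> spectral_index_set \<gamma> A \<Lambda> X})"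
proof -
  obtain \<tau> where orbit: "\<forall>x. \<exists>g\<in>carrier G. \<tau> x = act g x" and factor: "\<forall>a\<in>A. \<gamma> \<circ> \<Lambda> a = \<tau>"
    using assms(1) unfolding spectral_decomposition_system_def by blast
  have "\<gamma> (\<Lambda> a x) = \<tau> x" if "a \<in> A" for a x
    using factor that by (metis comp_apply)
  then interpret closed_spectral_system G act \<gamma> A \<Lambda>
    using assms(1,2) orbit
    by unfold_locales (auto simp: spectral_decomposition_system_def)
  show ?thesis
    using frechet_normal_cone_preimage[OF assms(4)] limiting_normal_cone_preimage[OF assms(4)] by blast
qed

end
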